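(* Let $n\ge q\ge1$ and let $\mathcal{S}$ be a set of two-factor interactions $F_iF_j$ among $n$ factors $F_1,\dots,F_n$. Suppose at least one of the following holds: (i) every factor appears in at most $2^q-1$ interactions of $\mathcal{S}$, and there is no set of $2^q$ factors such that $\mathcal{S}$ contains all $\binom{2^q}{2}$ pairwise interactions among them; (ii) there are at most $2^q-1$ factors each of which appears in at least $2^q-1$ interactions of $\mathcal{S}$. Then there exists a blocked $2^n$ factorial in blocks of size $2^q$ from which all main effects and all interactions in $\mathcal{S}$ are estimable.
   Context: A blocked $2^n$ factorial in blocks of size $2^q$ is specified by a $q\times n$ generator matrix $X$ over $\mathrm{GF}(2)$ of rank $q$: the principal block is the row space of $X$ and the other blocks are its cosets in $\mathrm{GF}(2)^n$. An effect of a set $S$ of factors, with contrast $(-1)^{\sum_{j\in S}x_j}$, is estimable iff its contrast sums to zero over every block. *)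

theory Defs
  imports Main
begin

text \<open>Vectors of GF(2)^n are represented as boolean functions on nat vanishing
  outside {0..<n}; True stands for 1 in GF(2).\<close>

definition gf2_vecs :: "nat \<Rightarrow> (nat \<Rightarrow> bool) set" where
  "gf2_vecs n = {x. \<forall>i\<ge>n. \<not> x i}"

definition gf2_add :: "(nat \<Rightarrow> bool) \<Rightarrow> (nat \<Rightarrow> bool) \<Rightarrow> (nat \<Rightarrow> bool)" where
  "gf2_add x y = (\<lambda>i. x i \<noteq> y i)"

text \<open>A q x n generator matrix X is given by its rows X 0, ..., X (q-1).
  The GF(2)-sum of the rows indexed by T is computed componentwise as a parity.\<close>

definition gf2_rowsum :: "(nat \<Rightarrow> nat \<Rightarrow> bool) \<Rightarrow> nat set \<Rightarrow> (nat \<Rightarrow> bool)" where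
  "gf2_rowsum X T = (\<lambda>j. odd (card {k \<in> T. X k j}))"

definition gf2_rowspace :: "nat \<Rightarrow> (nat \<Rightarrow> nat \<Rightarrow> bool) \<Rightarrow> (nat \<Rightarrow> bool) set" where
  "gf2_rowspace q X = {gf2_rowsum X T | T. T \<subseteq> {..<q}}"

definition gen_matrix :: "nat \<Rightarrow> nat \<Rightarrow> (nat \<Rightarrow> nat \<Rightarrow> bool) \<Rightarrow> bool" where
  "gen_matrix q n X \<longleftrightarrow>
     (\<forall>k<q. X k \<in> gf2_vecs n) \<and>
     (\<forall>T. T \<subseteq> {..<q} \<and> T \<noteq> {} \<longrightarrow> gf2_rowsum X T \<noteq> (\<lambda>_. False))"

definition blocks :: "nat \<Rightarrow> nat \<Rightarrow> (nat \<Rightarrow> nat \<Rightarrow> bool) \<Rightarrow> (nat \<Rightarrow> bool) set set" where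
  "blocks n q X = {(gf2_add a) ` gf2_rowspace q X | a. a \<in> gf2_vecs n}"

definition contrast :: "nat set \<Rightarrow> (nat \<Rightarrow> bool) \<Rightarrow> int" where
  "contrast S x = (-1) ^ card {j \<in> S. x j}"

definition estimable :: "nat \<Rightarrow> nat \<Rightarrow> (nat \<Rightarrow> nat \<Rightarrow> bool) \<Rightarrow> nat set \<Rightarrow> bool" where
  "estimable n q X S \<longleftrightarrow> (\<forall>B \<in> blocks n q X. (\<Sum>x\<in>B. contrast S x) = 0)"

definition deg :: "nat set set \<Rightarrow> nat \<Rightarrow> nat" where
  "deg I i = card {e \<in> I. i \<in> e}"

end

theory Submission
  imports Defs "HOL-Combinatorics.Transposition"
begin

text \<open>Label every factor \<open>j\<close> by a nonzero vector \<open>m j\<close> of \<open>GF(2)^q\<close> and take the binary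
  expansions of the labels as the columns of \<open>X\<close>. The main effect of \<open>j\<close> is then estimable
  because \<open>m j \<noteq> 0\<close>, the interaction of \<open>i\<close> and \<open>j\<close> because \<open>m i \<noteq> m j\<close>, and \<open>X\<close> has rank \<open>q\<close>
  as soon as the \<open>q\<close> unit vectors occur as labels. So it suffices to colour the interaction
  graph properly with the \<open>2^q - 1\<close> nonzero vectors, using at least \<open>q\<close> of them, which is
  possible since \<open>n \<ge> q\<close>. Under (i) such a colouring exists by Brooks' theorem, as
  \<open>2^q - 1 \<noteq> 2\<close>. Under (ii) every set of factors contains one with fewer than \<open>2^q - 1\<close>
  neighbours inside the set (a factor of small degree, or any factor if all of them are among
  the at most \<open>2^q - 1\<close> factors of large degree), so greedy colouring succeeds.

  Brooks' theorem is proved by induction on the graph: a vertex of small degree, a cut vertex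
  or a separating pair of vertices reduce it to smaller graphs, and in the remaining regular,
  3-connected case two non-adjacent neighbours of a vertex receive the same colour and the
  rest is coloured greedily (Lovasz).\<close>

section \<open>Colourings of graphs\<close>

definition nbrs :: "('a \<Rightarrow> 'a \<Rightarrow> bool) \<Rightarrow> 'a set \<Rightarrow> 'a \<Rightarrow> 'a set" where
  "nbrs E S v = {u \<in> S. E v u}"

definition proper_colouring :: "('a \<Rightarrow> 'a \<Rightarrow> bool) \<Rightarrow> 'a set \<Rightarrow> ('a \<Rightarrow> nat) \<Rightarrow> bool" where
  "proper_colouring E V c \<longleftrightarrow> (\<forall>u\<in>V. \<forall>v\<in>V. E u v \<longrightarrow> c u \<noteq> c v)"

definition colouring :: "('a \<Rightarrow> 'a \<Rightarrow> bool) \<Rightarrow> 'a set \<Rightarrow> nat \<Rightarrow> ('a \<Rightarrow> nat) \<Rightarrow> bool" where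
  "colouring E V k c \<longleftrightarrow> (\<forall>v\<in>V. c v < k) \<and> proper_colouring E V c"

definition colourable :: "('a \<Rightarrow> 'a \<Rightarrow> bool) \<Rightarrow> 'a set \<Rightarrow> nat \<Rightarrow> bool" where
  "colourable E V k \<longleftrightarrow> (\<exists>c. colouring E V k c)"

definition clique :: "('a \<Rightarrow> 'a \<Rightarrow> bool) \<Rightarrow> 'a set \<Rightarrow> bool" where
  "clique E F \<longleftrightarrow> (\<forall>a\<in>F. \<forall>b\<in>F. a \<noteq> b \<longrightarrow> E a b)"

definition separation :: "('a \<Rightarrow> 'a \<Rightarrow> bool) \<Rightarrow> 'a set \<Rightarrow> 'a set \<Rightarrow> 'a set \<Rightarrow> bool" where
  "separation E W A B \<longleftrightarrow>
     A \<noteq> {} \<and> B \<noteq> {} \<and> A \<inter> B = {} \<and> A \<union> B = W \<and> (\<forall>a\<in>A. \<forall>b\<in>B. \<not> E a b)"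

lemma finite_nbrs [simp]: "finite S \<Longrightarrow> finite (nbrs E S v)"
  by (simp add: nbrs_def)

lemma nbrs_mono: "S \<subseteq> T \<Longrightarrow> nbrs E S v \<subseteq> nbrs E T v"
  by (auto simp: nbrs_def)

lemma card_nbrs_mono: "finite T \<Longrightarrow> S \<subseteq> T \<Longrightarrow> card (nbrs E S v) \<le> card (nbrs E T v)"
  by (intro card_mono nbrs_mono) simp_all

lemma card_nbrs_less:
  assumes "finite T" "S \<subseteq> T" "y \<in> T - S" "E v y"
  shows "card (nbrs E S v) < card (nbrs E T v)"
proof (rule psubset_card_mono)
  show "nbrs E S v \<subset> nbrs E T v"
    using assms(2-4) nbrs_mono[OF assms(2)] by (auto simp: nbrs_def)
qed (use assms(1) in simp)

lemma card_nbrs_disjoint_le: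
  assumes "finite V" "B \<subseteq> V" "K \<subseteq> nbrs E V x" "K \<inter> B = {}"
  shows "card K + card (nbrs E B x) \<le> card (nbrs E V x)"
proof -
  have "K \<union> nbrs E B x \<subseteq> nbrs E V x" "K \<inter> nbrs E B x = {}"
    using assms(2-4) nbrs_mono[OF assms(2)] unfolding nbrs_def by auto
  moreover have "finite K" "finite (nbrs E B x)"
    using finite_subset[OF assms(3)] finite_subset[OF assms(2) assms(1)] assms(1) by simp_all
  ultimately show ?thesis
    using assms(1) card_mono[of "nbrs E V x" "K \<union> nbrs E B x"] by (simp add: card_Un_disjoint)
qed

lemma proper_colouring_subset: "W \<subseteq> V \<Longrightarrow> proper_colouring E V c \<Longrightarrow> proper_colouring E W c"
  by (auto simp: proper_colouring_def)

lemma proper_colouring_mono: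
  "(\<And>u v. E u v \<Longrightarrow> E' u v) \<Longrightarrow> proper_colouring E' V c \<Longrightarrow> proper_colouring E V c"
  by (auto simp: proper_colouring_def)

lemma proper_colouring_comp_inj: "inj \<pi> \<Longrightarrow> proper_colouring E V c \<Longrightarrow> proper_colouring E V (\<pi> \<circ> c)"
  by (auto simp: proper_colouring_def dest: injD)

lemma exists_unused_colour:
  assumes "finite N" "card N < card L"
  shows "\<exists>g\<in>L. g \<notin> c ` N"
proof (rule ccontr)
  assume "\<not> ?thesis"
  then have "card L \<le> card (c ` N)"
    using assms by (intro card_mono) auto
  then show False
    using card_image_le[OF assms(1), of c] assms(2) by linarith
qed

lemma proper_colouring_update:
  assumes "symp E" "irreflp E" "proper_colouring E (V - {w}) c" "g \<notin> c ` nbrs E V w"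
  shows "proper_colouring E V (c(w := g))"
  using assms unfolding proper_colouring_def nbrs_def symp_def irreflp_def
  by (smt (verit, ccfv_threshold) DiffI fun_upd_apply image_iff mem_Collect_eq singletonD)

lemma proper_colouring_glue:
  assumes "symp E" "proper_colouring E W1 c1" "proper_colouring E W2 c2"
    and agree: "\<forall>x\<in>W1 \<inter> W2. c1 x = c2 x" and no_edge: "\<forall>x\<in>W1 - W2. \<forall>y\<in>W2 - W1. \<not> E x y"
  shows "proper_colouring E (W1 \<union> W2) (\<lambda>x. if x \<in> W1 then c1 x else c2 x)"
  unfolding proper_colouring_def
proof (intro ballI impI)
  fix u v assume uv: "u \<in> W1 \<union> W2" "v \<in> W1 \<union> W2" "E u v"
  have "\<not> (u \<in> W1 - W2 \<and> v \<in> W2 - W1)" "\<not> (v \<in> W1 - W2 \<and> u \<in> W2 - W1)"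
    using uv(3) no_edge assms(1) by (auto dest: sympD)
  then show "(if u \<in> W1 then c1 u else c2 u) \<noteq> (if v \<in> W1 then c1 v else c2 v)"
    using uv agree assms(2,3) unfolding proper_colouring_def by (metis DiffI IntI UnE)
qed

lemma colouring_subset: "colouring E V k c \<Longrightarrow> W \<subseteq> V \<Longrightarrow> colouring E W k c"
  unfolding colouring_def using proper_colouring_subset by blast

lemma colouring_update:
  assumes "symp E" "irreflp E" "colouring E (V - {w}) k c" "g < k" "g \<notin> c ` nbrs E V w"
  shows "colouring E V k (c(w := g))"
  using assms proper_colouring_update[of E V w c g] unfolding colouring_def by auto

lemma colouring_extend_pair:
  assumes "symp E" "irreflp E" and c: "colouring E W k c"
    and ab: "a \<notin> W" "b \<notin> W" "\<not> E a b"
    and g: "g < k" "g \<notin> c ` (nbrs E W a \<union> nbrs E W b)"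
  shows "colouring E (W \<union> {a, b}) k (c(a := g, b := g))"
proof -
  have "(c(a := g, b := g)) u \<noteq> (c(a := g, b := g)) v"
    if uv: "u \<in> W \<union> {a, b}" "v \<in> W \<union> {a, b}" "E u v" for u v
  proof -
    have "\<not> (u \<in> {a, b} \<and> v \<in> {a, b})"
      using uv(3) ab(3) assms(1,2) by (auto dest: sympD irreflpD)
    moreover have "c u \<noteq> g" if "u \<in> W" "v \<in> {a, b}"
      using that uv(3) g(2) assms(1) unfolding nbrs_def by (auto dest: sympD)
    moreover have "c v \<noteq> g" if "v \<in> W" "u \<in> {a, b}"
      using that uv(3) g(2) unfolding nbrs_def by auto
    moreover have "c u \<noteq> c v" if "u \<in> W" "v \<in> W"
      using that uv(3) c unfolding colouring_def proper_colouring_def by blast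
    ultimately show ?thesis
      using uv(1,2) ab(1,2) by auto
  qed
  then show ?thesis
    using c g(1) unfolding colouring_def proper_colouring_def by auto
qed

lemma colouring_extend_pair_sparse:
  assumes "symp E" "irreflp E" "finite W" and c: "colouring E W k c"
    and "a \<notin> W" "b \<notin> W" "\<not> E a b"
    and "card (nbrs E W a) \<le> 1" "card (nbrs E W b) \<le> 1" "3 \<le> k"
  shows "\<exists>c'. colouring E (W \<union> {a, b}) k c' \<and> c' a = c' b"
proof -
  have "card (nbrs E W a \<union> nbrs E W b) < card {..<k}"
    using card_Un_le[of "nbrs E W a" "nbrs E W b"] assms(8-10) by simp
  moreover have "finite (nbrs E W a \<union> nbrs E W b)"
    using assms(3) by simp
  ultimately obtain g where "g < k" "g \<notin> c ` (nbrs E W a \<union> nbrs E W b)"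
    using exists_unused_colour[of _ "{..<k}" c] by blast
  then have "colouring E (W \<union> {a, b}) k (c(a := g, b := g))"
    using colouring_extend_pair[OF assms(1,2) c assms(5-7)] by blast
  then show ?thesis
    by (intro exI[of _ "c(a := g, b := g)"]) simp
qed

lemma colour_forced_by_clique:
  assumes c: "colouring E W k c"
    and K: "K \<subseteq> W" "finite K" "clique E K" "Suc (card K) = k"
    and ab: "a \<in> W" "b \<in> W" "\<forall>u\<in>K. E a u \<and> E b u"
  shows "c a = c b"
proof -
  have "inj_on c K"
    using K c unfolding inj_on_def clique_def colouring_def proper_colouring_def by blast
  moreover have "c ` K \<subseteq> {..<k}"
    using K(1) c unfolding colouring_def by auto
  ultimately have "card ({..<k} - c ` K) = 1"
    using K(2,4) by (simp add: card_Diff_subset card_image)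
  moreover have "c x \<in> {..<k} - c ` K" if "x \<in> {a, b}" for x
    using that ab K(1) c unfolding colouring_def proper_colouring_def by fastforce
  ultimately show ?thesis by (metis card_1_singletonE insertCI singletonD)
qed

lemma exists_colour_permutation:
  fixes a b a' b' :: nat
  assumes "a < k" "b < k" "a' < k" "b' < k" "a = b \<longleftrightarrow> a' = b'"
  shows "\<exists>\<pi>. inj \<pi> \<and> \<pi> a' = a \<and> \<pi> b' = b \<and> (\<forall>z<k. \<pi> z < k)"
proof -
  define \<pi>1 where "\<pi>1 = Transposition.transpose a' a"
  define \<pi> where "\<pi> = Transposition.transpose (\<pi>1 b') b \<circ> \<pi>1"
  have "inj \<pi>"
    unfolding \<pi>_def \<pi>1_def by (meson bij_betw_imp_inj_on bij_transpose inj_compose)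
  moreover have "\<pi> a' = a" "\<pi> b' = b"
    using assms(5) by (auto simp: \<pi>_def \<pi>1_def transpose_def)
  moreover have "\<forall>z<k. \<pi> z < k"
    using assms(1-4) by (simp add: \<pi>_def \<pi>1_def transpose_def)
  ultimately show ?thesis by blast
qed

lemma colourable_glue_two:
  assumes "symp E" and V: "W1 \<union> W2 = V" "W1 \<inter> W2 = {a, b}"
    and no_edge: "\<forall>x\<in>W1 - W2. \<forall>y\<in>W2 - W1. \<not> E x y"
    and c1: "colouring E W1 k c1" and c2: "colouring E W2 k c2"
    and same: "c1 a = c1 b \<longleftrightarrow> c2 a = c2 b"
  shows "colourable E V k"
proof -
  have "a \<in> W1" "b \<in> W1" "a \<in> W2" "b \<in> W2"
    using V(2) by auto
  then obtain \<pi> where \<pi>: "inj \<pi>" "\<pi> (c2 a) = c1 a" "\<pi> (c2 b) = c1 b" "\<forall>z<k. \<pi> z < k"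
    using exists_colour_permutation[of "c1 a" k "c1 b" "c2 a" "c2 b"] c1 c2 same
    unfolding colouring_def by blast
  define c where "c x = (if x \<in> W1 then c1 x else (\<pi> \<circ> c2) x)" for x
  have "\<forall>x\<in>W1 \<inter> W2. c1 x = (\<pi> \<circ> c2) x"
    using V(2) \<pi> by auto
  then have "proper_colouring E V c"
    using proper_colouring_glue[OF assms(1) _ proper_colouring_comp_inj[OF \<pi>(1)]] V(1)
      no_edge c1 c2 unfolding colouring_def c_def by blast
  moreover have "\<forall>v\<in>V. c v < k"
    using V(1) c1 c2 \<pi>(4) unfolding colouring_def c_def by auto
  ultimately show ?thesis unfolding colourable_def colouring_def by blast
qed

lemma list_colouring_degenerate:
  assumes "finite V" "symp E" "irreflp E"
    and "\<And>S. S \<subseteq> V \<Longrightarrow> S \<noteq> {} \<Longrightarrow> \<exists>w\<in>S. card (nbrs E S w) < card (L w)"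
  shows "\<exists>c. (\<forall>v\<in>V. c v \<in> L v) \<and> proper_colouring E V c"
  using assms(1,4)
proof (induction V rule: finite_psubset_induct)
  case (psubset V)
  show ?case
  proof (cases "V = {}")
    case True
    then show ?thesis by (simp add: proper_colouring_def)
  next
    case False
    then obtain w where w: "w \<in> V" "card (nbrs E V w) < card (L w)"
      using psubset.prems by blast
    obtain c where c: "\<forall>v\<in>V - {w}. c v \<in> L v" "proper_colouring E (V - {w}) c"
      using psubset.IH[of "V - {w}"] psubset.prems w(1) by blast
    obtain g where "g \<in> L w" "g \<notin> c ` nbrs E V w"
      using exists_unused_colour[OF finite_nbrs[OF psubset.hyps] w(2)] by blast
    then have "\<forall>v\<in>V. (c(w := g)) v \<in> L v" "proper_colouring E V (c(w := g))"
      using c proper_colouring_update[OF assms(2,3) c(2)] by auto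
    then show ?thesis by blast
  qed
qed

lemma colourable_degenerate:
  assumes "finite V" "symp E" "irreflp E"
    and "\<And>S. S \<subseteq> V \<Longrightarrow> S \<noteq> {} \<Longrightarrow> \<exists>w\<in>S. card (nbrs E S w) < k"
  shows "colourable E V k"
  using list_colouring_degenerate[OF assms(1-3), of "\<lambda>_. {..<k}"] assms(4)
  unfolding colourable_def colouring_def by simp

lemma list_colouring_connected:
  assumes "finite V" "symp E" "irreflp E"
    and connected: "\<And>A B. \<not> separation E V A B"
    and x: "x \<in> V" "card (nbrs E V x) < card (L x)"
    and "\<And>w. w \<in> V \<Longrightarrow> card (nbrs E V w) \<le> card (L w)"
  shows "\<exists>c. (\<forall>v\<in>V. c v \<in> L v) \<and> proper_colouring E V c"
proof (rule list_colouring_degenerate[OF assms(1-3)])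
  fix S assume S: "S \<subseteq> V" "S \<noteq> {}"
  show "\<exists>w\<in>S. card (nbrs E S w) < card (L w)"
  proof (cases "x \<in> S")
    case True
    then show ?thesis
      using card_nbrs_mono[OF assms(1) S(1), of E x] x(2) by (metis le_less_trans)
  next
    case False
    obtain s t where st: "s \<in> S" "t \<in> V - S" "E s t"
      using connected[of S "V - S"] S x(1) False unfolding separation_def by blast
    then have "card (nbrs E S s) < card (nbrs E V s)"
      using card_nbrs_less[OF assms(1) S(1)] by blast
    then show ?thesis
      using st(1) S(1) assms(7)[of s] by (meson less_le_trans subsetD)
  qed
qed

lemma colourable_few_high_degree:
  assumes "finite V" "symp E" "irreflp E" "card {v\<in>V. k \<le> card (nbrs E V v)} \<le> k"
  shows "colourable E V k"
proof (rule colourable_degenerate[OF assms(1-3)])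
  fix S assume S: "S \<subseteq> V" "S \<noteq> {}"
  show "\<exists>w\<in>S. card (nbrs E S w) < k"
  proof (cases "\<exists>w\<in>S. card (nbrs E V w) < k")
    case True
    then show ?thesis
      using card_nbrs_mono[OF assms(1) S(1)] le_less_trans by blast
  next
    case False
    then have high: "S \<subseteq> {v\<in>V. k \<le> card (nbrs E V v)}"
      using S(1) by force
    obtain w where w: "w \<in> S" using S(2) by blast
    have "nbrs E S w \<subset> S"
      using w assms(3) by (auto simp: nbrs_def irreflp_def)
    then have "card (nbrs E S w) < card S"
      using finite_subset[OF S(1) assms(1)] by (rule psubset_card_mono[rotated])
    also have "\<dots> \<le> k"
      using card_mono[OF _ high] assms(1,4) by force
    finally show ?thesis using w by blast
  qed
qed

lemma colouring_add_colour:
  assumes "symp E" "irreflp E" "finite V" "colouring E V k c"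
    and "card (c ` V) < card V" "card (c ` V) < k"
  shows "\<exists>c'. colouring E V k c' \<and> card (c' ` V) = Suc (card (c ` V))"
proof -
  have "\<not> inj_on c V"
    using assms(5) card_image by force
  then obtain u w where uw: "u \<in> V" "w \<in> V" "u \<noteq> w" "c u = c w"
    unfolding inj_on_def by blast
  have "card (c ` V) < card {..<k}"
    using assms(6) by simp
  then obtain g where g: "g < k" "g \<notin> c ` V"
    using exists_unused_colour[of "c ` V" "{..<k}" id] assms(3) by auto
  have "colouring E V k (c(u := g))"
    using colouring_update[OF assms(1,2) colouring_subset[OF assms(4)] g(1)] g(2)
    unfolding nbrs_def by blast
  moreover have "c ` (V - {u}) = c ` V"
    using uw by blast
  then have "c(u := g) ` V = insert g (c ` V)"
    using uw(1) by auto
  then have "card (c(u := g) ` V) = Suc (card (c ` V))"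
    using g(2) assms(3) by simp
  ultimately show ?thesis
    by blast
qed

lemma colouring_with_many_colours:
  assumes "symp E" "irreflp E" "finite V" "colouring E V k c" "m \<le> card V" "m \<le> k"
  shows "\<exists>c'. colouring E V k c' \<and> m \<le> card (c' ` V)"
  using assms(5,6)
proof (induction m)
  case 0
  then show ?case using assms(4) by blast
next
  case (Suc m)
  then obtain c where c: "colouring E V k c" "m \<le> card (c ` V)"
    by auto
  show ?case
  proof (cases "Suc m \<le> card (c ` V)")
    case True
    then show ?thesis using c(1) by blast
  next
    case False
    then have "card (c ` V) < card V" "card (c ` V) < k"
      using c(2) Suc.prems by simp_all
    then obtain c' where "colouring E V k c'" "card (c' ` V) = Suc (card (c ` V))"
      using colouring_add_colour[OF assms(1-3) c(1)] by blast
    then show ?thesis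
      using c(2) by (intro exI[of _ c']) simp
  qed
qed

section \<open>Brooks' theorem\<close>

definition brooks_graph :: "nat \<Rightarrow> ('a \<Rightarrow> 'a \<Rightarrow> bool) \<Rightarrow> 'a set \<Rightarrow> bool" where
  "brooks_graph k E V \<longleftrightarrow> finite V \<and> symp E \<and> irreflp E \<and> (\<forall>v\<in>V. card (nbrs E V v) \<le> k) \<and>
     \<not> (\<exists>F\<subseteq>V. card F = Suc k \<and> clique E F)"

lemma brooks_graph_subset: "brooks_graph k E V \<Longrightarrow> W \<subseteq> V \<Longrightarrow> brooks_graph k E W"
  unfolding brooks_graph_def
  by (meson card_nbrs_mono finite_subset le_trans subsetD subset_trans)

lemma separation_commute: "symp E \<Longrightarrow> separation E W A B \<Longrightarrow> separation E W B A"
  unfolding separation_def symp_def by blast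

definition add_edge :: "('a \<Rightarrow> 'a \<Rightarrow> bool) \<Rightarrow> 'a \<Rightarrow> 'a \<Rightarrow> 'a \<Rightarrow> 'a \<Rightarrow> bool" where
  "add_edge E a b u v \<longleftrightarrow> E u v \<or> (u = a \<and> v = b) \<or> (u = b \<and> v = a)"

lemma brooks_graph_add_edge:
  assumes G: "brooks_graph k E V" and W: "W \<subseteq> V" "a \<in> W" "b \<in> W" "a \<noteq> b"
    and out: "\<exists>y\<in>V - W. E a y" "\<exists>y\<in>V - W. E b y"
    and clique_free: "\<not> (\<exists>F\<subseteq>W. card F = Suc k \<and> clique (add_edge E a b) F)"
  shows "brooks_graph k (add_edge E a b) W"
proof -
  have G': "finite V" "symp E" "irreflp E" "\<forall>v\<in>V. card (nbrs E V v) \<le> k"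
    using G by (auto simp: brooks_graph_def)
  have finW: "finite W" using finite_subset[OF W(1) G'(1)] .
  have endpoint: "card (nbrs (add_edge E a b) W x) \<le> k"
    if x: "x \<in> {a, b}" "\<exists>y\<in>V - W. E x y" for x
  proof -
    have "nbrs (add_edge E a b) W x = insert (if x = a then b else a) (nbrs E W x)"
      using x(1) W unfolding nbrs_def add_edge_def by auto
    then have "card (nbrs (add_edge E a b) W x) \<le> Suc (card (nbrs E W x))"
      using finW by (simp add: card_insert_le_m1)
    moreover have "card (nbrs E W x) < card (nbrs E V x)"
      using x(2) card_nbrs_less[OF G'(1) W(1)] by blast
    moreover have "card (nbrs E V x) \<le> k"
      using G'(4) x(1) W by auto
    ultimately show ?thesis by linarith
  qed
  have "card (nbrs (add_edge E a b) W v) \<le> k" if "v \<in> W" for v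
  proof (cases "v \<in> {a, b}")
    case True
    then show ?thesis using endpoint out by blast
  next
    case False
    then have "nbrs (add_edge E a b) W v = nbrs E W v"
      unfolding nbrs_def add_edge_def by auto
    then show ?thesis
      using card_nbrs_mono[OF G'(1) W(1), of E v] G'(4) W(1) that by (metis le_trans subsetD)
  qed
  moreover have "symp (add_edge E a b)" "irreflp (add_edge E a b)"
    using G'(2,3) W(4) by (auto simp: add_edge_def symp_def irreflp_def)
  ultimately show ?thesis
    using finW clique_free unfolding brooks_graph_def by blast
qed

lemma clique_through_added_edge:
  assumes "symp E" "\<not> clique E F" "clique (add_edge E a b) F" "finite F" "card F = Suc k"
  shows "\<not> E a b" "clique E (F - {a, b})" "\<forall>u\<in>F - {a, b}. E a u \<and> E b u"
    "Suc (card (F - {a, b})) = k"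
proof -
  have ab: "a \<in> F" "b \<in> F" "a \<noteq> b"
    using assms(2,3) unfolding clique_def add_edge_def by metis+
  show "\<not> E a b"
    using assms(1-3) unfolding clique_def add_edge_def by (metis sympD)
  show "clique E (F - {a, b})"
    using assms(3) unfolding clique_def add_edge_def by auto
  show "\<forall>u\<in>F - {a, b}. E a u \<and> E b u"
    using assms(3) ab unfolding clique_def add_edge_def by auto
  have "2 \<le> card F"
    using card_mono[OF assms(4), of "{a, b}"] ab by simp
  then show "Suc (card (F - {a, b})) = k"
    using assms(4,5) ab by (simp add: card_Diff_subset)
qed

lemma nbrs_on_both_sides:
  assumes "symp E" "separation E (V - {a, b}) A B" "a \<in> V" "a \<noteq> b"
    and no_cut: "\<And>A B. \<not> separation E (V - {b}) A B"
  shows "\<exists>y\<in>A. E a y" "\<exists>y\<in>B. E a y"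
proof -
  have AB: "A \<noteq> {}" "B \<noteq> {}" "A \<inter> B = {}" "A \<union> B = V - {a, b}" "\<forall>x\<in>A. \<forall>y\<in>B. \<not> E x y"
    using assms(2) unfolding separation_def by auto
  then have "\<forall>x\<in>B. \<forall>y\<in>A. \<not> E x y"
    using assms(1) by (auto dest: sympD)
  then show "\<exists>y\<in>A. E a y"
    using no_cut[of "insert a B" A] AB assms(3,4) unfolding separation_def by auto
  show "\<exists>y\<in>B. E a y"
    using no_cut[of "insert a A" B] AB assms(3,4) unfolding separation_def by auto
qed

lemma exists_nonadjacent_nbrs:
  assumes G: "brooks_graph k E V" and x: "x \<in> V" "card (nbrs E V x) = k"
  shows "\<exists>y z. y \<in> V \<and> z \<in> V \<and> y \<noteq> z \<and> \<not> E y z \<and> E x y \<and> E x z"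
proof -
  have G': "finite V" "symp E" "irreflp E"
    and clique_free: "\<not> (\<exists>F\<subseteq>V. card F = Suc k \<and> clique E F)"
    using G by (auto simp: brooks_graph_def)
  have "\<not> clique E (nbrs E V x)"
  proof
    assume "clique E (nbrs E V x)"
    then have "clique E (insert x (nbrs E V x))"
      using G'(2) unfolding clique_def nbrs_def by (auto dest: sympD)
    moreover have "x \<notin> nbrs E V x"
      using G'(3) unfolding nbrs_def by (auto dest: irreflpD)
    then have "card (insert x (nbrs E V x)) = Suc k"
      using x(2) G'(1) by simp
    moreover have "insert x (nbrs E V x) \<subseteq> V"
      using x(1) unfolding nbrs_def by auto
    ultimately show False
      using clique_free by blast
  qed
  then show ?thesis
    unfolding clique_def nbrs_def by auto
qed

text \<open>Colour \<open>0\<close> is kept free on the neighbours of \<open>y\<close> and \<open>z\<close>, so that both can take it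
  later; this is what gives their common neighbour \<open>x\<close> the slack needed for greedy colouring
  of the connected graph \<open>V - {y, z}\<close>.\<close>

lemma list_colouring_sparing_pair:
  assumes "finite V" "symp E" "irreflp E" "\<forall>v\<in>V. card (nbrs E V v) \<le> k" "2 \<le> k"
    and connected: "\<And>A B. \<not> separation E (V - {y, z}) A B"
    and yz: "y \<in> V" "z \<in> V" "y \<noteq> z" and x: "x \<in> V" "E x y" "E x z"
  shows "\<exists>c. (\<forall>v\<in>V - {y, z}. c v \<in> {..<k} - (if E v y \<or> E v z then {0} else {})) \<and>
             proper_colouring E (V - {y, z}) c"
proof (rule list_colouring_connected[OF _ assms(2,3) connected])
  show "finite (V - {y, z})"
    using assms(1) by simp
  show "x \<in> V - {y, z}"
    using x assms(3) by (auto dest: irreflpD)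
  have "nbrs E (V - {y, z}) x \<subseteq> nbrs E V x - {y, z}" "{y, z} \<subseteq> nbrs E V x"
    using yz x unfolding nbrs_def by auto
  then have "card (nbrs E (V - {y, z}) x) \<le> k - 2"
    using card_mono[OF _ \<open>nbrs E (V - {y, z}) x \<subseteq> _\<close>] card_Diff_subset[of "{y, z}"]
      assms(1,4) x(1) yz(3) by fastforce
  then show "card (nbrs E (V - {y, z}) x) < card ({..<k} - (if E x y \<or> E x z then {0} else {}))"
    using x(2) \<open>2 \<le> k\<close> by simp
next
  fix w assume w: "w \<in> V - {y, z}"
  show "card (nbrs E (V - {y, z}) w) \<le> card ({..<k} - (if E w y \<or> E w z then {0} else {}))"
  proof (cases "E w y \<or> E w z")
    case True
    then have "card (nbrs E (V - {y, z}) w) < card (nbrs E V w)"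
      using card_nbrs_less[OF assms(1), of "V - {y, z}"] yz(1,2) by blast
    moreover have "card (nbrs E V w) \<le> k"
      using assms(4) w by blast
    ultimately show ?thesis
      using True \<open>2 \<le> k\<close> by simp
  next
    case False
    have "card (nbrs E V w) \<le> k"
      using assms(4) w by blast
    then show ?thesis
      using card_nbrs_mono[OF assms(1), of "V - {y, z}" E w] False by simp
  qed
qed

lemma colouring_sparing_pair:
  assumes "finite V" "symp E" "irreflp E" "\<forall>v\<in>V. card (nbrs E V v) \<le> k" "2 \<le> k"
    and "\<And>A B. \<not> separation E (V - {y, z}) A B"
    and "y \<in> V" "z \<in> V" "y \<noteq> z" "x \<in> V" "E x y" "E x z"
  shows "\<exists>c. colouring E (V - {y, z}) k c \<and> 0 \<notin> c ` (nbrs E (V - {y, z}) y \<union> nbrs E (V - {y, z}) z)"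
proof -
  obtain c where c: "\<forall>v\<in>V - {y, z}. c v \<in> {..<k} - (if E v y \<or> E v z then {0} else {})"
    "proper_colouring E (V - {y, z}) c"
    using list_colouring_sparing_pair[OF assms] by blast
  have "c w \<noteq> 0" if "w \<in> nbrs E (V - {y, z}) y \<union> nbrs E (V - {y, z}) z" for w
  proof -
    have w: "w \<in> V - {y, z}" "E w y \<or> E w z"
      using that sympD[OF assms(2)] unfolding nbrs_def by auto
    show ?thesis
      using bspec[OF c(1) w(1)] w(2) by simp
  qed
  then have "0 \<notin> c ` (nbrs E (V - {y, z}) y \<union> nbrs E (V - {y, z}) z)"
    by (metis imageE)
  moreover have "colouring E (V - {y, z}) k c"
    using c unfolding colouring_def by blast
  ultimately show ?thesis
    by blast
qed

lemma brooks_low_degree: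
  assumes G: "brooks_graph k E V" and IH: "\<And>W. W \<subset> V \<Longrightarrow> colourable E W k"
    and v: "v \<in> V" "card (nbrs E V v) < k"
  shows "colourable E V k"
proof -
  have G': "finite V" "symp E" "irreflp E"
    using G by (auto simp: brooks_graph_def)
  have "V - {v} \<subset> V" using v(1) by blast
  then obtain c where c: "colouring E (V - {v}) k c"
    using IH unfolding colourable_def by blast
  obtain g where "g \<in> {..<k}" "g \<notin> c ` nbrs E V v"
    using exists_unused_colour[OF finite_nbrs[OF G'(1)], of E v "{..<k}"] v(2) by auto
  then have "colouring E V k (c(v := g))"
    using colouring_update[OF G'(2,3) c] by simp
  then show ?thesis unfolding colourable_def by blast
qed

lemma brooks_cut_vertex:
  assumes G: "brooks_graph k E V" and IH: "\<And>W. W \<subset> V \<Longrightarrow> colourable E W k"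
    and v: "v \<in> V" and sep: "separation E (V - {v}) A B"
  shows "colourable E V k"
proof -
  have AB: "A \<noteq> {}" "B \<noteq> {}" "A \<inter> B = {}" "A \<union> B = V - {v}" "\<forall>x\<in>A. \<forall>y\<in>B. \<not> E x y"
    using sep unfolding separation_def by auto
  then have "insert v A \<subset> V" "insert v B \<subset> V"
    using v by blast+
  then obtain c1 c2 where "colouring E (insert v A) k c1" "colouring E (insert v B) k c2"
    using IH unfolding colourable_def by meson
  moreover have "insert v A \<union> insert v B = V" "insert v A \<inter> insert v B = {v, v}"
    using AB v by auto
  moreover have "\<forall>x\<in>insert v A - insert v B. \<forall>y\<in>insert v B - insert v A. \<not> E x y"
    using AB(5) by blast
  ultimately show ?thesis
    using colourable_glue_two G unfolding brooks_graph_def by metis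
qed

text \<open>A \<open>(k+1)\<close>-clique through the added edge \<open>ab\<close> on the \<open>A\<close>-side consists of \<open>a\<close>, \<open>b\<close>
  and \<open>k - 1\<close> common neighbours of theirs in \<open>A\<close>. These force \<open>a\<close> and \<open>b\<close> to have equal colours
  on the \<open>A\<close>-side and leave them at most one neighbour each on the \<open>B\<close>-side.\<close>

lemma brooks_two_cut_clique_side:
  assumes G: "brooks_graph k E V" and IH: "\<And>W. W \<subset> V \<Longrightarrow> colourable E W k" and "3 \<le> k"
    and ab: "a \<in> V" "b \<in> V" and sep: "separation E (V - {a, b}) A B"
    and F: "F \<subseteq> A \<union> {a, b}" "card F = Suc k" "clique (add_edge E a b) F"
  shows "\<exists>c1 c2. colouring E (A \<union> {a, b}) k c1 \<and> c1 a = c1 b \<and>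
                 colouring E (B \<union> {a, b}) k c2 \<and> c2 a = c2 b"
proof -
  have G': "finite V" "symp E" "irreflp E" "\<forall>v\<in>V. card (nbrs E V v) \<le> k"
    and clique_free: "\<not> (\<exists>F\<subseteq>V. card F = Suc k \<and> clique E F)"
    using G by (auto simp: brooks_graph_def)
  have AB: "A \<noteq> {}" "B \<noteq> {}" "A \<inter> B = {}" "A \<union> B = V - {a, b}"
    using sep unfolding separation_def by auto
  define K where "K = F - {a, b}"
  have "F \<subseteq> V"
    using F(1) AB(4) ab by auto
  then have "finite F"
    using G'(1) finite_subset by blast
  have "\<not> clique E F"
    using clique_free F(2) \<open>F \<subseteq> V\<close> by blast
  then have K: "\<not> E a b" "clique E K" "\<forall>u\<in>K. E a u \<and> E b u" "Suc (card K) = k"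
    using clique_through_added_edge[OF G'(2) _ F(3) \<open>finite F\<close> F(2)] unfolding K_def by simp_all
  have KA: "K \<subseteq> A" "finite K"
    using F(1) \<open>finite F\<close> unfolding K_def by auto
  have "A \<union> {a, b} \<subset> V" "B \<subset> V"
    using AB ab by auto
  then obtain c1 c where c1: "colouring E (A \<union> {a, b}) k c1" and c: "colouring E B k c"
    using IH unfolding colourable_def by meson
  have "c1 a = c1 b"
    using colour_forced_by_clique[OF c1 _ KA(2) K(2,4) _ _ K(3)] KA(1) by blast
  have few: "card (nbrs E B x) \<le> 1" if "x \<in> {a, b}" for x
  proof -
    have "K \<subseteq> nbrs E V x"
      using K(3) KA(1) AB(4) that unfolding nbrs_def by auto
    then have "card K + card (nbrs E B x) \<le> card (nbrs E V x)"
      using card_nbrs_disjoint_le[OF G'(1), of B] KA(1) AB(3,4) by blast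
    then show ?thesis
      using G'(4) that ab K(4) by fastforce
  qed
  have "finite B"
    using finite_subset[OF psubset_imp_subset[OF \<open>B \<subset> V\<close>] G'(1)] .
  then obtain c2 where "colouring E (B \<union> {a, b}) k c2" "c2 a = c2 b"
    using colouring_extend_pair_sparse[OF G'(2,3) _ c _ _ K(1) few[of a] few[of b] \<open>3 \<le> k\<close>]
      AB(4) by blast
  then show ?thesis
    using c1 \<open>c1 a = c1 b\<close> by blast
qed

lemma brooks_two_cut_add_edge_side:
  fixes V :: "'a set"
  assumes G: "brooks_graph k E V"
    and IH: "\<And>W E'. W \<subset> V \<Longrightarrow> brooks_graph k E' W \<Longrightarrow> colourable E' W k"
    and W: "W \<subset> V" "a \<in> W" "b \<in> W" "a \<noteq> b"
    and out: "\<exists>y\<in>V - W. E a y" "\<exists>y\<in>V - W. E b y"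
    and clique_free: "\<not> (\<exists>F\<subseteq>W. card F = Suc k \<and> clique (add_edge E a b) F)"
  shows "\<exists>c. colouring E W k c \<and> c a \<noteq> c b"
proof -
  have "brooks_graph k (add_edge E a b) W"
    using brooks_graph_add_edge[OF G _ W(2-4) out clique_free] W(1) by blast
  then obtain c where c: "colouring (add_edge E a b) W k c"
    using IH W(1) unfolding colourable_def by blast
  then have "colouring E W k c"
    using proper_colouring_mono[of E "add_edge E a b"] unfolding colouring_def add_edge_def by blast
  moreover have "c a \<noteq> c b"
    using c W(2,3) unfolding colouring_def proper_colouring_def add_edge_def by blast
  ultimately show ?thesis by blast
qed

text \<open>On each side of the separating pair \<open>{a, b}\<close> either some colouring gives \<open>a\<close> and \<open>b\<close>
  distinct colours, found by colouring the side with the edge \<open>ab\<close> added, or adding the edge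
  creates a \<open>(k+1)\<close>-clique and both sides can be coloured with \<open>a\<close> and \<open>b\<close> alike.\<close>

lemma brooks_two_cut_sides:
  fixes V :: "'a set"
  assumes G: "brooks_graph k E V" and "3 \<le> k"
    and IH: "\<And>W E'. W \<subset> V \<Longrightarrow> brooks_graph k E' W \<Longrightarrow> colourable E' W k"
    and ab: "a \<in> V" "b \<in> V" "a \<noteq> b" and sep: "separation E (V - {a, b}) A B"
    and out: "\<exists>y\<in>A. E a y" "\<exists>y\<in>A. E b y" "\<exists>y\<in>B. E a y" "\<exists>y\<in>B. E b y"
  shows "\<exists>c1 c2. colouring E (A \<union> {a, b}) k c1 \<and> colouring E (B \<union> {a, b}) k c2 \<and>
                 (c1 a = c1 b \<longleftrightarrow> c2 a = c2 b)"
proof -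
  have IH_E: "\<And>W. W \<subset> V \<Longrightarrow> colourable E W k"
    using IH brooks_graph_subset[OF G] by blast
  have sep': "separation E (V - {a, b}) B A"
    using separation_commute[OF _ sep] G by (simp add: brooks_graph_def)
  have AB: "A \<inter> B = {}" "A \<union> B = V - {a, b}" "A \<noteq> {}" "B \<noteq> {}"
    using sep unfolding separation_def by auto
  then have sides: "A \<union> {a, b} \<subset> V" "B \<union> {a, b} \<subset> V"
    "V - (A \<union> {a, b}) = B" "V - (B \<union> {a, b}) = A"
    using ab by auto
  let ?clique = "\<lambda>W. \<exists>F\<subseteq>W. card F = Suc k \<and> clique (add_edge E a b) F"
  consider "?clique (A \<union> {a, b})" | "?clique (B \<union> {a, b})"
    | "\<not> ?clique (A \<union> {a, b})" "\<not> ?clique (B \<union> {a, b})"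
    by blast
  then show ?thesis
  proof cases
    case 1
    then show ?thesis
      using brooks_two_cut_clique_side[OF G IH_E \<open>3 \<le> k\<close> ab(1,2) sep] by blast
  next
    case 2
    then show ?thesis
      using brooks_two_cut_clique_side[OF G IH_E \<open>3 \<le> k\<close> ab(1,2) sep'] by blast
  next
    case 3
    then have "\<exists>c1. colouring E (A \<union> {a, b}) k c1 \<and> c1 a \<noteq> c1 b"
      "\<exists>c2. colouring E (B \<union> {a, b}) k c2 \<and> c2 a \<noteq> c2 b"
      using brooks_two_cut_add_edge_side[OF G IH sides(1) _ _ ab(3)]
        brooks_two_cut_add_edge_side[OF G IH sides(2) _ _ ab(3)] out
      unfolding sides(3,4) by simp_all
    then show ?thesis
      by blast
  qed
qed

lemma brooks_two_cut:
  fixes V :: "'a set"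
  assumes G: "brooks_graph k E V" and "3 \<le> k"
    and IH: "\<And>W E'. W \<subset> V \<Longrightarrow> brooks_graph k E' W \<Longrightarrow> colourable E' W k"
    and ab: "a \<in> V" "b \<in> V" "a \<noteq> b" and sep: "separation E (V - {a, b}) A B"
    and no_cut: "\<And>v A B. v \<in> V \<Longrightarrow> \<not> separation E (V - {v}) A B"
  shows "colourable E V k"
proof -
  have sym: "symp E"
    using G by (simp add: brooks_graph_def)
  have "separation E (V - {b, a}) A B"
    using sep by (simp add: insert_commute)
  then have "\<exists>y\<in>A. E a y" "\<exists>y\<in>B. E a y" "\<exists>y\<in>A. E b y" "\<exists>y\<in>B. E b y"
    using nbrs_on_both_sides[OF sym sep ab(1,3) no_cut[OF ab(2)]]
      nbrs_on_both_sides[OF sym _ ab(2) ab(3)[symmetric] no_cut[OF ab(1)]] by blast+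
  then obtain c1 c2 where "colouring E (A \<union> {a, b}) k c1" "colouring E (B \<union> {a, b}) k c2"
    "c1 a = c1 b \<longleftrightarrow> c2 a = c2 b"
    using brooks_two_cut_sides[OF G \<open>3 \<le> k\<close> IH ab sep] by blast
  moreover have "(A \<union> {a, b}) \<union> (B \<union> {a, b}) = V" "(A \<union> {a, b}) \<inter> (B \<union> {a, b}) = {a, b}"
    "\<forall>x\<in>A \<union> {a, b} - (B \<union> {a, b}). \<forall>y\<in>B \<union> {a, b} - (A \<union> {a, b}). \<not> E x y"
    using sep ab unfolding separation_def by auto
  ultimately show ?thesis
    using colourable_glue_two[OF sym] by blast
qed

lemma brooks_three_connected:
  assumes G: "brooks_graph k E V" and "3 \<le> k"
    and x: "x \<in> V" "card (nbrs E V x) = k"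
    and no_two_cut: "\<And>y z A B. y \<in> V \<Longrightarrow> z \<in> V \<Longrightarrow> y \<noteq> z \<Longrightarrow> \<not> separation E (V - {y, z}) A B"
  shows "colourable E V k"
proof -
  have G': "finite V" "symp E" "irreflp E" "\<forall>v\<in>V. card (nbrs E V v) \<le> k"
    using G by (auto simp: brooks_graph_def)
  obtain y z where yz: "y \<in> V" "z \<in> V" "y \<noteq> z" "\<not> E y z" "E x y" "E x z"
    using exists_nonadjacent_nbrs[OF G x] by blast
  then obtain c where "colouring E (V - {y, z}) k c"
    "0 \<notin> c ` (nbrs E (V - {y, z}) y \<union> nbrs E (V - {y, z}) z)"
    using colouring_sparing_pair[OF G' _ no_two_cut[OF yz(1-3)] yz(1-3) x(1)]
      \<open>3 \<le> k\<close> by auto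
  then have "colouring E (V - {y, z} \<union> {y, z}) k (c(y := 0, z := 0))"
    using colouring_extend_pair[OF G'(2,3)] yz(4) \<open>3 \<le> k\<close> by simp
  moreover have "V - {y, z} \<union> {y, z} = V"
    using yz(1,2) by auto
  ultimately show ?thesis
    unfolding colourable_def by auto
qed

lemma brooks_step:
  fixes V :: "'a set"
  assumes G: "brooks_graph k E V" and "3 \<le> k"
    and IH: "\<And>W E'. W \<subset> V \<Longrightarrow> brooks_graph k E' W \<Longrightarrow> colourable E' W k"
  shows "colourable E V k"
proof -
  have IH_E: "\<And>W. W \<subset> V \<Longrightarrow> colourable E W k"
    using IH brooks_graph_subset[OF G] by blast
  show ?thesis
  proof (cases "\<exists>v\<in>V. card (nbrs E V v) < k")
    case True
    then show ?thesis using brooks_low_degree[OF G IH_E] by blast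
  next
    case no_low: False
    show ?thesis
    proof (cases "\<exists>v\<in>V. \<exists>A B. separation E (V - {v}) A B")
      case True
      then show ?thesis using brooks_cut_vertex[OF G IH_E] by blast
    next
      case no_cut: False
      show ?thesis
      proof (cases "\<exists>a\<in>V. \<exists>b\<in>V. a \<noteq> b \<and> (\<exists>A B. separation E (V - {a, b}) A B)")
        case True
        then show ?thesis using brooks_two_cut[OF G \<open>3 \<le> k\<close> IH] no_cut by blast
      next
        case no_two_cut: False
        show ?thesis
        proof (cases "V = {}")
          case True
          then show ?thesis by (simp add: colourable_def colouring_def proper_colouring_def)
        next
          case False
          then obtain x where "x \<in> V" by blast
          moreover have "card (nbrs E V x) = k"
            using G no_low \<open>x \<in> V\<close> unfolding brooks_graph_def by (meson antisym not_le)
          ultimately show ?thesis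
            using brooks_three_connected[OF G \<open>3 \<le> k\<close>] no_two_cut by blast
        qed
      qed
    qed
  qed
qed

theorem brooks:
  assumes "3 \<le> k" "brooks_graph k E V"
  shows "colourable E V k"
proof -
  have "finite V"
    using assms(2) by (simp add: brooks_graph_def)
  then show ?thesis
    using assms(2)
  proof (induction V arbitrary: E rule: finite_psubset_induct)
    case (psubset V)
    then show ?case
      using brooks_step[OF _ assms(1)] by blast
  qed
qed

lemma brooks_graph_colourable_le_1:
  assumes "k \<le> 1" and G: "brooks_graph k E V"
  shows "colourable E V k"
proof (cases "V = {}")
  case True
  then show ?thesis by (simp add: colourable_def colouring_def proper_colouring_def)
next
  case False
  then obtain v where "v \<in> V" by blast
  have clique_free: "\<not> (\<exists>F\<subseteq>V. card F = Suc k \<and> clique E F)" and "symp E" "irreflp E"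
    using G by (auto simp: brooks_graph_def)
  have "{v} \<subseteq> V" "card {v} = Suc 0" "clique E {v}"
    using \<open>v \<in> V\<close> by (auto simp: clique_def)
  then have "k = 1"
    using clique_free assms(1) by (metis le_neq_implies_less less_one)
  have "\<not> E u w" if "u \<in> V" "w \<in> V" for u w
  proof
    assume "E u w"
    then have "u \<noteq> w" "E w u"
      using \<open>irreflp E\<close> \<open>symp E\<close> by (auto dest: irreflpD sympD)
    then have "card {u, w} = Suc k" "clique E {u, w}" "{u, w} \<subseteq> V"
      using \<open>E u w\<close> \<open>k = 1\<close> that unfolding clique_def by auto
    then show False
      using clique_free by blast
  qed
  then have "colouring E V k (\<lambda>_. 0)"
    using \<open>k = 1\<close> unfolding colouring_def proper_colouring_def by auto
  then show ?thesis
    unfolding colourable_def by blast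
qed

corollary brooks_graph_colourable:
  assumes "k \<noteq> 2" "brooks_graph k E V"
  shows "colourable E V k"
proof (cases "k \<le> 1")
  case True
  then show ?thesis using brooks_graph_colourable_le_1 assms(2) by blast
next
  case False
  then have "3 \<le> k" using assms(1) by linarith
  then show ?thesis using brooks assms(2) by blast
qed

section \<open>Blocked designs from colourings\<close>

lemma odd_card_sym_diff:
  assumes "finite A" "finite B"
  shows "odd (card (sym_diff A B)) \<longleftrightarrow> odd (card A) \<noteq> odd (card B)"
proof -
  have split: "card X = card (X - Y) + card (X \<inter> Y)" if "finite X" for X Y :: "'a set"
    using that card_Un_disjoint[of "X - Y" "X \<inter> Y"] by (auto simp: Un_Diff_Int)
  have "card A = card (A - B) + card (A \<inter> B)" "card B = card (B - A) + card (A \<inter> B)"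
    using split[of A B] split[of B A] assms by (simp_all add: Int_commute)
  moreover have "card (sym_diff A B) = card (A - B) + card (B - A)"
    using assms by (intro card_Un_disjoint) auto
  ultimately show ?thesis by presburger
qed

lemma gf2_rowsum_singleton: "gf2_rowsum X {k} = X k"
  by (rule ext) (simp add: gf2_rowsum_def Collect_conv_if)

lemma gf2_add_rowsum:
  assumes "finite T" "finite T'"
  shows "gf2_add (gf2_rowsum X T) (gf2_rowsum X T') = gf2_rowsum X (sym_diff T T')"
proof
  fix j
  have "{k \<in> sym_diff T T'. X k j} = sym_diff {k\<in>T. X k j} {k\<in>T'. X k j}"
    by auto
  then show "gf2_add (gf2_rowsum X T) (gf2_rowsum X T') j = gf2_rowsum X (sym_diff T T') j"
    using odd_card_sym_diff[of "{k\<in>T. X k j}" "{k\<in>T'. X k j}"] assms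
    by (simp add: gf2_add_def gf2_rowsum_def)
qed

lemma contrast_gf2_add:
  assumes "finite S" "odd (card {j\<in>S. r j})"
  shows "contrast S (gf2_add x r) = - contrast S x"
proof -
  have "{j\<in>S. gf2_add x r j} = sym_diff {j\<in>S. x j} {j\<in>S. r j}"
    unfolding gf2_add_def by auto
  then have "odd (card {j\<in>S. gf2_add x r j}) \<longleftrightarrow> even (card {j\<in>S. x j})"
    using odd_card_sym_diff[of "{j\<in>S. x j}" "{j\<in>S. r j}"] assms by simp
  then show ?thesis
    unfolding contrast_def by (simp add: minus_one_power_iff)
qed

text \<open>Translation by a row-space vector with odd overlap permutes every block and flips
  the sign of the contrast, so the contrast sums to zero over the block.\<close>

lemma estimable_if_odd_rowsum:
  assumes "finite S" "T \<subseteq> {..<q}" "odd (card {j\<in>S. gf2_rowsum X T j})"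
  shows "estimable n q X S"
  unfolding estimable_def
proof
  fix B assume "B \<in> blocks n q X"
  then obtain a where B: "B = gf2_add a ` gf2_rowspace q X"
    unfolding blocks_def by blast
  define \<phi> where "\<phi> x = gf2_add x (gf2_rowsum X T)" for x
  have \<phi>_\<phi>: "\<phi> (\<phi> x) = x" for x
    unfolding \<phi>_def gf2_add_def by auto
  have \<phi>_B: "\<phi> x \<in> B" if "x \<in> B" for x
  proof -
    from that obtain T' where T': "T' \<subseteq> {..<q}" "x = gf2_add a (gf2_rowsum X T')"
      unfolding B gf2_rowspace_def by blast
    have "finite T" "finite T'"
      using T'(1) assms(2) finite_subset by auto
    then have "\<phi> x = gf2_add a (gf2_rowsum X (sym_diff T' T))"
      unfolding \<phi>_def T'(2) by (simp add: gf2_add_rowsum[symmetric]) (auto simp: gf2_add_def)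
    then show ?thesis
      unfolding B gf2_rowspace_def using T'(1) assms(2) by blast
  qed
  have "(\<Sum>x\<in>B. contrast S (\<phi> x)) = (\<Sum>x\<in>B. contrast S x)"
    by (rule sum.reindex_bij_witness[of B \<phi> \<phi>]) (use \<phi>_\<phi> \<phi>_B in auto)
  moreover have "(\<Sum>x\<in>B. contrast S (\<phi> x)) = - (\<Sum>x\<in>B. contrast S x)"
    unfolding \<phi>_def using contrast_gf2_add[OF assms(1,3)] by (simp add: sum_negf)
  ultimately show "(\<Sum>x\<in>B. contrast S x) = 0"
    by linarith
qed

lemma estimable_if_odd_row:
  "finite S \<Longrightarrow> k < q \<Longrightarrow> odd (card {j\<in>S. X k j}) \<Longrightarrow> estimable n q X S"
  using estimable_if_odd_rowsum[of S "{k}" q X n] by (simp add: gf2_rowsum_singleton)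

lemma bit_differs_below:
  fixes a b :: nat
  assumes "a < 2 ^ q" "b < 2 ^ q" "a \<noteq> b"
  shows "\<exists>k<q. bit a k \<noteq> bit b k"
proof -
  obtain k where "bit a k \<noteq> bit b k"
    using assms(3) bit_eq_iff by blast
  moreover have "bit a k = (k < q \<and> bit a k)" "bit b k = (k < q \<and> bit b k)"
    using bit_take_bit_iff[of q a k] bit_take_bit_iff[of q b k] assms(1,2)
    by (simp_all add: take_bit_nat_eq_self)
  ultimately show ?thesis by auto
qed

definition label_matrix :: "nat \<Rightarrow> (nat \<Rightarrow> nat) \<Rightarrow> nat \<Rightarrow> nat \<Rightarrow> bool" where
  "label_matrix n m k j \<longleftrightarrow> j < n \<and> bit (m j) k"

lemma gen_matrix_label_matrix:
  assumes "\<forall>k<q. \<exists>j<n. m j = 2 ^ k"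
  shows "gen_matrix q n (label_matrix n m)"
  unfolding gen_matrix_def
proof (intro conjI allI impI)
  fix k assume "k < q"
  show "label_matrix n m k \<in> gf2_vecs n"
    by (simp add: gf2_vecs_def label_matrix_def)
next
  fix T assume T: "T \<subseteq> {..<q} \<and> T \<noteq> {}"
  then obtain k where k: "k \<in> T" "k < q" by blast
  then obtain j where j: "j < n" "m j = 2 ^ k"
    using assms by blast
  then have "{k' \<in> T. label_matrix n m k' j} = {k}"
    using k(1) by (auto simp: label_matrix_def bit_exp_iff)
  then have "gf2_rowsum (label_matrix n m) T j"
    by (simp add: gf2_rowsum_def)
  then show "gf2_rowsum (label_matrix n m) T \<noteq> (\<lambda>_. False)"
    by auto
qed

lemma estimable_main_effect_label_matrix:
  assumes "i < n" "0 < m i" "m i < 2 ^ q"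
  shows "estimable n q (label_matrix n m) {i}"
proof -
  obtain k where k: "k < q" "bit (m i) k"
    using bit_differs_below[OF assms(3), of 0] assms(2) by auto
  then have "{j \<in> {i}. label_matrix n m k j} = {i}"
    using assms(1) by (auto simp: label_matrix_def)
  then show ?thesis
    by (intro estimable_if_odd_row[OF _ k(1)]) simp_all
qed

lemma estimable_interaction_label_matrix:
  assumes "i < n" "j < n" "m i < 2 ^ q" "m j < 2 ^ q" "m i \<noteq> m j"
  shows "estimable n q (label_matrix n m) {i, j}"
proof -
  obtain k where k: "k < q" "bit (m i) k \<noteq> bit (m j) k"
    using bit_differs_below[OF assms(3-5)] by blast
  then have "{l \<in> {i, j}. label_matrix n m k l} = (if bit (m i) k then {i} else {j})"
    using assms(1,2) by (auto simp: label_matrix_def)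
  then show ?thesis
    by (intro estimable_if_odd_row[OF _ k(1)]) simp_all
qed

lemma exists_labelling_with_units:
  fixes C :: "nat set"
  assumes "C \<subseteq> {..<2 ^ q - 1}" "q \<le> card C"
  shows "\<exists>g. bij_betw g {..<2 ^ q - 1} {1..<2 ^ q} \<and> (\<forall>k<q. (2::nat) ^ k \<in> g ` C)"
proof -
  obtain U where U: "U \<subseteq> C" "card U = q"
    using obtain_subset_with_card_n[OF assms(2)] by blast
  have finU: "U \<subseteq> {..<2 ^ q - 1}" "finite U"
    using U(1) assms(1) finite_subset[of U "{..<2 ^ q - 1}"] by auto
  define P where "P = (\<lambda>k. (2::nat) ^ k) ` {..<q}"
  have "card P = q" "finite P"
    unfolding P_def by (simp_all add: card_image inj_on_def)
  have P: "P \<subseteq> {1..<2 ^ q}"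
    unfolding P_def by auto
  obtain h0 where h0: "bij_betw h0 U P"
    using finite_same_card_bij[OF finU(2) \<open>finite P\<close>] \<open>card P = q\<close> U(2) by auto
  have "card ({..<2 ^ q - 1} - U) = card ({1..<2 ^ q} - P)"
    using finU \<open>card P = q\<close> U(2) P by (simp add: card_Diff_subset P_def)
  then obtain h1 where h1: "bij_betw h1 ({..<2 ^ q - 1} - U) ({1..<2 ^ q} - P)"
    using finite_same_card_bij by blast
  define g where "g x = (if x \<in> U then h0 x else h1 x)" for x
  have "bij_betw g U P" "bij_betw g ({..<2 ^ q - 1} - U) ({1..<2 ^ q} - P)"
    using bij_betw_cong[of U g h0 P] bij_betw_cong[of "{..<2 ^ q - 1} - U" g h1] h0 h1
    by (simp_all add: g_def)
  then have "bij_betw g (U \<union> ({..<2 ^ q - 1} - U)) (P \<union> ({1..<2 ^ q} - P))"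
    by (rule bij_betw_combine) blast
  moreover have "U \<union> ({..<2 ^ q - 1} - U) = {..<2 ^ q - 1}" "P \<union> ({1..<2 ^ q} - P) = {1..<2 ^ q}"
    using finU(1) P by auto
  moreover have "g ` U = P"
    using \<open>bij_betw g U P\<close> unfolding bij_betw_def by blast
  ultimately show ?thesis
    using U(1) unfolding P_def by (metis image_eqI image_mono lessThan_iff subsetD)
qed

lemma design_from_labelling:
  assumes "\<forall>j<n. 0 < m j \<and> m j < 2 ^ q" "\<forall>k<q. \<exists>j<n. m j = 2 ^ k"
  shows "gen_matrix q n (label_matrix n m)" "\<forall>i<n. estimable n q (label_matrix n m) {i}"
    "\<forall>i<n. \<forall>j<n. m i \<noteq> m j \<longrightarrow> estimable n q (label_matrix n m) {i, j}"
  using gen_matrix_label_matrix[OF assms(2)] estimable_main_effect_label_matrix[of _ n m q]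
    estimable_interaction_label_matrix[of _ n _ m q] assms(1) by blast+

lemma labelling_from_colouring:
  assumes c: "colouring E {..<n} (2 ^ q - 1) c" "q \<le> card (c ` {..<n})"
  shows "\<exists>m :: nat \<Rightarrow> nat. (\<forall>j<n. 0 < m j \<and> m j < 2 ^ q) \<and> (\<forall>k<q. \<exists>j<n. m j = 2 ^ k) \<and>
             (\<forall>i<n. \<forall>j<n. E i j \<longrightarrow> m i \<noteq> m j)"
proof -
  have c_range: "c j < 2 ^ q - 1" if "j < n" for j
    using that c(1) unfolding colouring_def by simp
  then have "c ` {..<n} \<subseteq> {..<2 ^ q - 1}"
    by auto
  then obtain g where g: "bij_betw g {..<2 ^ q - 1} {1..<2 ^ q}"
    "\<forall>k<q. (2::nat) ^ k \<in> g ` c ` {..<n}"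
    using exists_labelling_with_units[OF _ c(2)] by blast
  define m where "m j = g (c j)" for j
  have "\<forall>j<n. 0 < m j \<and> m j < 2 ^ q"
  proof (intro allI impI)
    fix j assume "j < n"
    then have "g (c j) \<in> {1..<2 ^ q}"
      using bij_betw_apply[OF g(1)] c_range by simp
    then show "0 < m j \<and> m j < 2 ^ q"
      unfolding m_def by simp
  qed
  moreover have "\<forall>k<q. \<exists>j<n. m j = 2 ^ k"
  proof (intro allI impI)
    fix k assume "k < q"
    then obtain j where "j < n" "2 ^ k = g (c j)"
      using g(2) by auto
    then show "\<exists>j<n. m j = 2 ^ k"
      unfolding m_def by auto
  qed
  moreover have "\<forall>i<n. \<forall>j<n. E i j \<longrightarrow> m i \<noteq> m j"
  proof (intro allI impI)
    fix i j assume "i < n" "j < n" "E i j"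
    then have "c i \<noteq> c j"
      using c(1) unfolding colouring_def proper_colouring_def by simp
    then show "m i \<noteq> m j"
      using inj_onD[OF bij_betw_imp_inj_on[OF g(1)]] c_range \<open>i < n\<close> \<open>j < n\<close> unfolding m_def
      by (metis lessThan_iff)
  qed
  ultimately show ?thesis
    by blast
qed

lemma design_from_colouring:
  assumes "symp E" "irreflp E" "q \<le> n" "colourable E {..<n} (2 ^ q - 1)"
  shows "\<exists>X. gen_matrix q n X \<and> (\<forall>i<n. estimable n q X {i}) \<and>
             (\<forall>i<n. \<forall>j<n. E i j \<longrightarrow> estimable n q X {i, j})"
proof -
  obtain c0 where c0: "colouring E {..<n} (2 ^ q - 1) c0"
    using assms(4) unfolding colourable_def by blast
  have "q \<le> card {..<n}"
    using assms(3) by simp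
  moreover have "q \<le> 2 ^ q - 1"
    using less_exp[of q] by linarith
  ultimately obtain c where c: "colouring E {..<n} (2 ^ q - 1) c" "q \<le> card (c ` {..<n})"
    using colouring_with_many_colours[OF assms(1,2) finite_lessThan c0] by blast
  obtain m :: "nat \<Rightarrow> nat" where m: "\<forall>j<n. 0 < m j \<and> m j < 2 ^ q" "\<forall>k<q. \<exists>j<n. m j = 2 ^ k"
    and distinct: "\<forall>i<n. \<forall>j<n. E i j \<longrightarrow> m i \<noteq> m j"
    using labelling_from_colouring[OF c] by blast
  have "\<forall>i<n. \<forall>j<n. E i j \<longrightarrow> estimable n q (label_matrix n m) {i, j}"
    using design_from_labelling(3)[OF m] distinct by blast
  then show ?thesis
    using design_from_labelling(1,2)[OF m] by blast
qed

definition interaction_graph :: "nat set set \<Rightarrow> nat \<Rightarrow> nat \<Rightarrow> bool" where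
  "interaction_graph I a b \<longleftrightarrow> {a, b} \<in> I"

lemma interaction_graph:
  assumes "\<forall>e\<in>I. \<exists>i j. i < n \<and> j < n \<and> i \<noteq> j \<and> e = {i, j}"
  shows "symp (interaction_graph I)" "irreflp (interaction_graph I)"
    "card (nbrs (interaction_graph I) {..<n} v) \<le> deg I v"
proof -
  show "symp (interaction_graph I)" "irreflp (interaction_graph I)"
    using assms unfolding interaction_graph_def symp_def irreflp_def
    by (auto simp: insert_commute doubleton_eq_iff)
  have "I \<subseteq> Pow {..<n}"
    using assms by auto
  then have "finite {e \<in> I. v \<in> e}"
    using finite_subset by fastforce
  moreover have "inj_on (\<lambda>u. {v, u}) (nbrs (interaction_graph I) {..<n} v)"
    by (auto simp: inj_on_def doubleton_eq_iff)
  moreover have "(\<lambda>u. {v, u}) ` nbrs (interaction_graph I) {..<n} v \<subseteq> {e \<in> I. v \<in> e}"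
    unfolding nbrs_def interaction_graph_def by auto
  ultimately show "card (nbrs (interaction_graph I) {..<n} v) \<le> deg I v"
    unfolding deg_def by (rule card_inj_on_le[rotated 2])
qed

lemma colourable_interaction_graph_bounded_degree:
  assumes "\<forall>e\<in>I. \<exists>i j. i < n \<and> j < n \<and> i \<noteq> j \<and> e = {i, j}" "k \<noteq> 2"
    and "\<forall>i<n. deg I i \<le> k"
    and "\<not> (\<exists>F. F \<subseteq> {..<n} \<and> card F = Suc k \<and> (\<forall>a\<in>F. \<forall>b\<in>F. a \<noteq> b \<longrightarrow> {a, b} \<in> I))"
  shows "colourable (interaction_graph I) {..<n} k"
proof (rule brooks_graph_colourable[OF assms(2)])
  show "brooks_graph k (interaction_graph I) {..<n}"
    unfolding brooks_graph_def
  proof (intro conjI)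
    show "finite {..<n}" "symp (interaction_graph I)" "irreflp (interaction_graph I)"
      using interaction_graph[OF assms(1)] by simp_all
    show "\<forall>v\<in>{..<n}. card (nbrs (interaction_graph I) {..<n} v) \<le> k"
      using interaction_graph(3)[OF assms(1)] assms(3) order_trans by (meson lessThan_iff)
    show "\<not> (\<exists>F\<subseteq>{..<n}. card F = Suc k \<and> clique (interaction_graph I) F)"
      using assms(4) unfolding clique_def interaction_graph_def by simp
  qed
qed

lemma colourable_interaction_graph_few_high_degree:
  assumes "\<forall>e\<in>I. \<exists>i j. i < n \<and> j < n \<and> i \<noteq> j \<and> e = {i, j}"
    and "card {i. i < n \<and> k \<le> deg I i} \<le> k"
  shows "colourable (interaction_graph I) {..<n} k"
proof (rule colourable_few_high_degree)
  show "finite {..<n}" "symp (interaction_graph I)" "irreflp (interaction_graph I)"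
    using interaction_graph[OF assms(1)] by simp_all
  have "{v \<in> {..<n}. k \<le> card (nbrs (interaction_graph I) {..<n} v)} \<subseteq> {i. i < n \<and> k \<le> deg I i}"
    using interaction_graph(3)[OF assms(1)] order_trans by blast
  then have "card {v \<in> {..<n}. k \<le> card (nbrs (interaction_graph I) {..<n} v)}
      \<le> card {i. i < n \<and> k \<le> deg I i}"
    by (intro card_mono) simp_all
  then show "card {v \<in> {..<n}. k \<le> card (nbrs (interaction_graph I) {..<n} v)} \<le> k"
    using assms(2) by linarith
qed

theorem theorem3:
  fixes n q :: nat and I :: "nat set set"
  assumes "1 \<le> q" and "q \<le> n"
    and I_pairs: "\<forall>e\<in>I. \<exists>i j. i < n \<and> j < n \<and> i \<noteq> j \<and> e = {i, j}"
    and cond: "((\<forall>i<n. deg I i \<le> 2 ^ q - 1) \<and>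
               \<not> (\<exists>F. F \<subseteq> {..<n} \<and> card F = 2 ^ q \<and>
                     (\<forall>a\<in>F. \<forall>b\<in>F. a \<noteq> b \<longrightarrow> {a, b} \<in> I)))
            \<or> card {i. i < n \<and> deg I i \<ge> 2 ^ q - 1} \<le> 2 ^ q - 1"
  shows "\<exists>X. gen_matrix q n X \<and> (\<forall>i<n. estimable n q X {i}) \<and> (\<forall>e\<in>I. estimable n q X e)"
proof -
  have "Suc (2 ^ q - 1) = (2::nat) ^ q" "odd (2 ^ q - 1 :: nat)"
    using \<open>1 \<le> q\<close> by simp_all
  then have "colourable (interaction_graph I) {..<n} (2 ^ q - 1)"
    using cond colourable_interaction_graph_bounded_degree[OF I_pairs, of "2 ^ q - 1"]
      colourable_interaction_graph_few_high_degree[OF I_pairs, of "2 ^ q - 1"]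
    by (metis even_numeral)
  then obtain X where X: "gen_matrix q n X" "\<forall>i<n. estimable n q X {i}"
    "\<forall>i<n. \<forall>j<n. interaction_graph I i j \<longrightarrow> estimable n q X {i, j}"
    using design_from_colouring[OF interaction_graph(1,2)[OF I_pairs] \<open>q \<le> n\<close>] by blast
  have "estimable n q X e" if "e \<in> I" for e
  proof -
    obtain i j where "i < n" "j < n" "e = {i, j}"
      using I_pairs \<open>e \<in> I\<close> by blast
    then show ?thesis
      using X(3) \<open>e \<in> I\<close> unfolding interaction_graph_def by blast
  qed
  then show ?thesis
    using X(1,2) by blast
qed

end
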